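(* Let $m\ge 1$ and let $(\phi_n)_{n\ge 0}$ be vectors in $\mathbb{R}^m$ such that the rank-one symmetric matrices $A_n=\phi_n\phi_n^\top$ satisfy $0\le A_n\le I$. Define the transition matrices $\Phi(i,i)=I$ and $\Phi(n+1,i)=(I-A_n)\Phi(n,i)$ for $n\ge i$. Let $(\mu_j)_{j\ge0}$ be nonnegative real numbers (weights), and for integers $0\le k<N$ set $$S_{Nk}=\sum_{j=k}^{N-1}\mu_jA_j,\qquad B_{jk}=\sum_{l=k}^{j-1}(\phi_j^\top\phi_l)^2 .$$ Then, provided the denominator below is nonzero, $$\|\Phi(N,k)\|^2\le 1-\frac{\lambda_{\min}(S_{Nk})}{\left(\sqrt{\max_{k\le j<N}\mu_j}+\sqrt{\sum_{j=k}^{N-1}\mu_jB_{jk}}\right)^2}.$$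
   Context: $\|\cdot\|$ denotes the spectral norm of a matrix, $\lambda_{\min}$ the smallest eigenvalue of a symmetric matrix, and $0\le A\le I$ is in the positive semidefinite (Loewner) order. *)

theory Defs
  imports "HOL-Analysis.Analysis"
begin

definition outer :: "real^'m \<Rightarrow> real^'m^'m" where
  "outer v = (\<chi> i j. v $ i * v $ j)"

definition loewner_le :: "real^'m^'m \<Rightarrow> real^'m^'m \<Rightarrow> bool" where
  "loewner_le A B \<longleftrightarrow> (\<forall>x. 0 \<le> x \<bullet> ((B - A) *v x))"

definition spec_norm :: "real^'m^'m \<Rightarrow> real" where
  "spec_norm A = onorm (\<lambda>x. A *v x)"

definition lambda_min :: "real^'m^'m \<Rightarrow> real" where
  "lambda_min S = Min {l. \<exists>v. v \<noteq> 0 \<and> S *v v = l *\<^sub>R v}"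

text \<open>Transition matrices: PhiD A i d = Phi(i+d, i).\<close>
primrec PhiD :: "(nat \<Rightarrow> real^'m^'m) \<Rightarrow> nat \<Rightarrow> nat \<Rightarrow> real^'m^'m" where
  "PhiD A i 0 = mat 1"
| "PhiD A i (Suc d) = (mat 1 - A (i + d)) ** PhiD A i d"

definition Phi :: "(nat \<Rightarrow> real^'m^'m) \<Rightarrow> nat \<Rightarrow> nat \<Rightarrow> real^'m^'m" where
  "Phi A n i = PhiD A i (n - i)"

end

theory Submission
  imports Defs
begin

text \<open>Follow a vector x along the trajectory z_n = Phi(n,k) x. Each step
  z_(n+1) = z_n - a_n phi_n with a_n = phi_n \<bullet> z_n lowers |z|^2 by at least a_n^2 because
  |phi_n| \<le> 1, so |Phi(N,k) x|^2 \<le> |x|^2 - \<Sum> a_j^2. Conversely, telescoping gives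
  x = z_j + \<Sum>_(l<j) a_l phi_l, hence phi_j \<bullet> x = a_j + \<Sum>_(l<j) (phi_j \<bullet> phi_l) a_l, and the
  weighted Minkowski and Cauchy-Schwarz inequalities turn
  lambda_min(S) |x|^2 \<le> x \<bullet> S x = \<Sum> mu_j (phi_j \<bullet> x)^2 into lambda_min(S) |x|^2 \<le> D \<Sum> a_j^2,
  D being the denominator of the bound. Together, |Phi(N,k) x|^2 \<le> (1 - lambda_min(S)/D) |x|^2.\<close>

lemma quadratic_nonneg_imp_linear_coeff_zero:
  fixes c g :: real
  assumes "\<And>t. 0 \<le> 2*t*c + t\<^sup>2 * g"
  shows "c = 0"
proof (rule ccontr)
  assume c: "c \<noteq> 0"
  have g: "g \<ge> 0" using assms[of 1] assms[of "-1"] by (simp add: power2_eq_square)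
  define t where "t = - c / (g + 1)"
  have ct: "c = - t * (g + 1)" using g by (simp add: t_def)
  have t0: "t \<noteq> 0" using c ct by auto
  have "0 \<le> 2*t*c + t\<^sup>2 * g" by (rule assms)
  also have "\<dots> = - (t\<^sup>2) * (g + 2)" unfolding ct by (simp add: algebra_simps power2_eq_square)
  also have "\<dots> < 0" using g t0 by (simp add: mult_pos_pos)
  finally show False by simp
qed

lemma symmetric_matrix_inner_commute:
  fixes S :: "real^'n^'n"
  assumes "transpose S = S"
  shows "(S *v u) \<bullet> w = u \<bullet> (S *v w)"
  by (metis assms dot_lmul_matrix vector_transpose_matrix)

lemma quadratic_form_attains_min_on_sphere:
  fixes S :: "real^'n^'n"
  obtains v where "v \<bullet> v = 1" and "\<And>y. (v \<bullet> (S *v v)) * (y \<bullet> y) \<le> y \<bullet> (S *v y)"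
proof -
  let ?f = "\<lambda>v. v \<bullet> (S *v v)"
  let ?K = "sphere (0::real^'n) 1"
  have "continuous_on ?K ?f"
    by (intro continuous_intros)
  moreover have "?K \<noteq> {}"
    using vector_choose_size[of 1, where 'a="real^'n"] by auto
  ultimately obtain v where v: "v \<in> ?K" and vmin: "\<And>y. y \<in> ?K \<Longrightarrow> ?f v \<le> ?f y"
    using continuous_attains_inf[of ?K ?f] by auto
  have "?f v * (y \<bullet> y) \<le> ?f y" for y
  proof (cases "y = 0")
    case False
    let ?z = "(1 / norm y) *\<^sub>R y"
    have "?f v \<le> ?f ?z" using False by (intro vmin) simp
    also have "?f ?z = ?f y / (norm y)\<^sup>2"
      by (simp add: matrix_vector_mult_scaleR power2_eq_square)
    finally show ?thesis using False by (simp add: field_simps power2_norm_eq_inner)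
  qed simp
  moreover have "v \<bullet> v = 1" using v by (simp add: dot_square_norm)
  ultimately show thesis using that by blast
qed

text \<open>Perturbing a minimiser v of the Rayleigh quotient to v + t w leaves a quadratic in t
  without constant term that is nonnegative, so its linear coefficient w \<bullet> (S v - m v) vanishes.\<close>

lemma quadratic_form_minimizer_is_eigenvector:
  fixes S :: "real^'n^'n"
  assumes sym: "transpose S = S"
    and min: "\<And>y. m * (y \<bullet> y) \<le> y \<bullet> (S *v y)"
    and attained: "v \<bullet> (S *v v) = m * (v \<bullet> v)"
  shows "S *v v = m *\<^sub>R v"
proof -
  have "w \<bullet> (S *v v - m *\<^sub>R v) = 0" for w
  proof (rule quadratic_nonneg_imp_linear_coeff_zero)
    fix t :: real
    have sw: "v \<bullet> (S *v w) = w \<bullet> (S *v v)"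
      using symmetric_matrix_inner_commute[OF sym, of w v] by (simp add: inner_commute)
    have "0 \<le> (v + t *\<^sub>R w) \<bullet> (S *v (v + t *\<^sub>R w)) - m * ((v + t *\<^sub>R w) \<bullet> (v + t *\<^sub>R w))"
      using min by simp
    also have "\<dots> = 2*t*(w \<bullet> (S *v v - m *\<^sub>R v)) + t\<^sup>2 * (w \<bullet> (S *v w) - m * (w \<bullet> w))"
      using attained
      by (simp add: matrix_vector_right_distrib matrix_vector_mult_scaleR inner_add_left
          inner_add_right inner_diff_right sw inner_commute[of w v] algebra_simps power2_eq_square)
    finally show "0 \<le> 2*t*(w \<bullet> (S *v v - m *\<^sub>R v)) + t\<^sup>2 * (w \<bullet> (S *v w) - m * (w \<bullet> w))" .
  qed
  from this[of "S *v v - m *\<^sub>R v"] show ?thesis by simp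
qed

text \<open>Eigenvectors of distinct eigenvalues are orthogonal, hence linearly independent.\<close>

lemma finite_eigenvalues_symmetric:
  fixes S :: "real^'n^'n"
  assumes sym: "transpose S = S"
  shows "finite {l. \<exists>v. v \<noteq> 0 \<and> S *v v = l *\<^sub>R v}"
proof -
  define L where "L = {l. \<exists>v. v \<noteq> 0 \<and> S *v v = l *\<^sub>R v}"
  define U where "U l = (SOME u. u \<noteq> 0 \<and> S *v u = l *\<^sub>R u)" for l
  have U: "U l \<noteq> 0 \<and> S *v U l = l *\<^sub>R U l" if "l \<in> L" for l
    using that unfolding L_def U_def by (rule CollectE) (rule someI_ex)
  have inj: "inj_on U L"
  proof (rule inj_onI)
    fix a b assume ab: "a \<in> L" "b \<in> L" "U a = U b"
    have "a *\<^sub>R U a = b *\<^sub>R U a" using U[OF ab(1)] U[OF ab(2)] ab(3) by metis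
    thus "a = b" using U[OF ab(1)] by (simp add: scaleR_cancel_right)
  qed
  have "pairwise orthogonal (U ` L)"
  proof (clarsimp simp: pairwise_def)
    fix a b assume ab: "a \<in> L" "b \<in> L" "U a \<noteq> U b"
    hence "a \<noteq> b" by auto
    have "a * (U a \<bullet> U b) = (S *v U a) \<bullet> U b" using U[OF ab(1)] by simp
    also have "\<dots> = U a \<bullet> (S *v U b)" by (rule symmetric_matrix_inner_commute[OF sym])
    also have "\<dots> = b * (U a \<bullet> U b)" using U[OF ab(2)] by simp
    finally show "orthogonal (U a) (U b)" using \<open>a \<noteq> b\<close> by (simp add: orthogonal_def)
  qed
  moreover have "0 \<notin> U ` L" using U by auto
  ultimately have "independent (U ` L)" by (rule pairwise_orthogonal_independent)
  hence "finite (U ` L)" by (rule finiteI_independent)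
  thus ?thesis using inj finite_imageD unfolding L_def by blast
qed

lemma lambda_min_le_quadratic_form:
  fixes S :: "real^'n^'n"
  assumes sym: "transpose S = S"
  shows "lambda_min S * (x \<bullet> x) \<le> x \<bullet> (S *v x)"
proof -
  obtain v :: "real^'n" where v: "v \<bullet> v = 1" and min: "\<And>y. (v \<bullet> (S *v v)) * (y \<bullet> y) \<le> y \<bullet> (S *v y)"
    using quadratic_form_attains_min_on_sphere[of S] by blast
  define m where "m = v \<bullet> (S *v v)"
  have eig: "S *v v = m *\<^sub>R v"
    using sym min v by (intro quadratic_form_minimizer_is_eigenvector) (auto simp: m_def)
  have "v \<noteq> 0" using v by auto
  have "m \<le> l" if "u \<noteq> 0" "S *v u = l *\<^sub>R u" for l u
    using min[of u] that by (simp add: m_def)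
  hence "lambda_min S = m"
    unfolding lambda_min_def using finite_eigenvalues_symmetric[OF sym] eig \<open>v \<noteq> 0\<close>
    by (intro Min_eqI) auto
  thus ?thesis using min by (simp add: m_def)
qed

lemma spec_norm_square_le:
  fixes A :: "real^'n^'n"
  assumes "\<And>x. (A *v x) \<bullet> (A *v x) \<le> c * (x \<bullet> x)"
  shows "(spec_norm A)\<^sup>2 \<le> c"
proof -
  obtain x0 :: "real^'n" where "norm x0 = 1"
    using vector_choose_size[of 1] by auto
  hence "0 \<le> c" using assms[of x0] by (metis inner_ge_zero mult.right_neutral norm_eq_1 order_trans)
  have "norm (A *v x) \<le> sqrt c * norm x" for x
    using real_sqrt_le_mono[OF assms[of x]]
    by (simp add: norm_eq_sqrt_inner real_sqrt_mult)
  hence "spec_norm A \<le> sqrt c"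
    unfolding spec_norm_def by (rule onorm_le)
  moreover have "0 \<le> spec_norm A"
    unfolding spec_norm_def by (intro onorm_pos_le matrix_vector_mul_bounded_linear)
  ultimately have "(spec_norm A)\<^sup>2 \<le> (sqrt c)\<^sup>2" by (rule power_mono)
  thus ?thesis using \<open>0 \<le> c\<close> by simp
qed

lemma sum_weighted_square_add_le:
  fixes \<nu> a b :: "'i \<Rightarrow> real"
  assumes nu: "\<And>j. j \<in> I \<Longrightarrow> 0 \<le> \<nu> j"
  shows "(\<Sum>j\<in>I. \<nu> j * (a j + b j)\<^sup>2)
     \<le> (sqrt (\<Sum>j\<in>I. \<nu> j * (a j)\<^sup>2) + sqrt (\<Sum>j\<in>I. \<nu> j * (b j)\<^sup>2))\<^sup>2"
proof -
  have L2: "L2_set (\<lambda>j. sqrt (\<nu> j) * f j) I = sqrt (\<Sum>j\<in>I. \<nu> j * (f j)\<^sup>2)" for f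
    unfolding L2_set_def using nu by (intro arg_cong[where f=sqrt] sum.cong) (simp_all add: power_mult_distrib)
  have lhs_nonneg: "0 \<le> (\<Sum>j\<in>I. \<nu> j * (a j + b j)\<^sup>2)"
    using nu by (intro sum_nonneg mult_nonneg_nonneg) auto
  have "L2_set (\<lambda>j. sqrt (\<nu> j) * (a j + b j)) I
      \<le> L2_set (\<lambda>j. sqrt (\<nu> j) * a j) I + L2_set (\<lambda>j. sqrt (\<nu> j) * b j) I"
    using L2_set_triangle_ineq[of "\<lambda>j. sqrt (\<nu> j) * a j" "\<lambda>j. sqrt (\<nu> j) * b j" I]
    by (simp add: distrib_left)
  hence "sqrt (\<Sum>j\<in>I. \<nu> j * (a j + b j)\<^sup>2)
      \<le> sqrt (\<Sum>j\<in>I. \<nu> j * (a j)\<^sup>2) + sqrt (\<Sum>j\<in>I. \<nu> j * (b j)\<^sup>2)"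
    by (simp only: L2)
  hence "(sqrt (\<Sum>j\<in>I. \<nu> j * (a j + b j)\<^sup>2))\<^sup>2
      \<le> (sqrt (\<Sum>j\<in>I. \<nu> j * (a j)\<^sup>2) + sqrt (\<Sum>j\<in>I. \<nu> j * (b j)\<^sup>2))\<^sup>2"
    using lhs_nonneg by (intro power_mono) simp_all
  thus ?thesis using lhs_nonneg by simp
qed

lemma sum_weighted_square_perturbed_le:
  fixes \<nu> a :: "'i \<Rightarrow> real" and c :: "'i \<Rightarrow> 'i \<Rightarrow> real"
  assumes fin: "finite I" and nu: "\<And>j. j \<in> I \<Longrightarrow> 0 \<le> \<nu> j"
    and M: "\<And>j. j \<in> I \<Longrightarrow> \<nu> j \<le> M"
    and P: "\<And>j. j \<in> I \<Longrightarrow> P j \<subseteq> I"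
  shows "(\<Sum>j\<in>I. \<nu> j * (a j + (\<Sum>l\<in>P j. c j l * a l))\<^sup>2)
     \<le> (sqrt M + sqrt (\<Sum>j\<in>I. \<nu> j * (\<Sum>l\<in>P j. (c j l)\<^sup>2)))\<^sup>2 * (\<Sum>j\<in>I. (a j)\<^sup>2)"
proof -
  let ?E = "\<Sum>j\<in>I. (a j)\<^sup>2"
  let ?B = "\<Sum>j\<in>I. \<nu> j * (\<Sum>l\<in>P j. (c j l)\<^sup>2)"
  have diag: "(\<Sum>j\<in>I. \<nu> j * (a j)\<^sup>2) \<le> M * ?E"
    unfolding sum_distrib_left using nu M by (intro sum_mono mult_right_mono) auto
  have "(\<Sum>j\<in>I. \<nu> j * (\<Sum>l\<in>P j. c j l * a l)\<^sup>2) \<le> (\<Sum>j\<in>I. \<nu> j * ((\<Sum>l\<in>P j. (c j l)\<^sup>2) * ?E))"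
  proof (intro sum_mono mult_left_mono)
    fix j assume j: "j \<in> I"
    show "0 \<le> \<nu> j" using nu j .
    have "(\<Sum>l\<in>P j. c j l * a l)\<^sup>2 \<le> (\<Sum>l\<in>P j. (c j l)\<^sup>2) * (\<Sum>l\<in>P j. (a l)\<^sup>2)"
      by (rule Cauchy_Schwarz_ineq_sum)
    also have "\<dots> \<le> (\<Sum>l\<in>P j. (c j l)\<^sup>2) * ?E"
      using P[OF j] fin by (intro mult_left_mono sum_mono2) (auto intro: sum_nonneg)
    finally show "(\<Sum>l\<in>P j. c j l * a l)\<^sup>2 \<le> (\<Sum>l\<in>P j. (c j l)\<^sup>2) * ?E" .
  qed
  also have "\<dots> = ?B * ?E" by (simp add: sum_distrib_right mult.assoc)
  finally have offdiag: "(\<Sum>j\<in>I. \<nu> j * (\<Sum>l\<in>P j. c j l * a l)\<^sup>2) \<le> ?B * ?E" .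
  have "(\<Sum>j\<in>I. \<nu> j * (a j + (\<Sum>l\<in>P j. c j l * a l))\<^sup>2)
     \<le> (sqrt (\<Sum>j\<in>I. \<nu> j * (a j)\<^sup>2) + sqrt (\<Sum>j\<in>I. \<nu> j * (\<Sum>l\<in>P j. c j l * a l)\<^sup>2))\<^sup>2"
    using nu by (rule sum_weighted_square_add_le)
  also have "\<dots> \<le> (sqrt (M * ?E) + sqrt (?B * ?E))\<^sup>2"
    using nu diag offdiag by (intro power_mono add_mono real_sqrt_le_mono add_nonneg_nonneg real_sqrt_ge_zero
        sum_nonneg mult_nonneg_nonneg) auto
  also have "\<dots> = (sqrt M + sqrt ?B)\<^sup>2 * ?E"
    by (simp add: real_sqrt_mult power_mult_distrib sum_nonneg flip: distrib_right)
  finally show ?thesis .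
qed

lemma sum_matrix_vector_mult: "(\<Sum>j\<in>I. M j) *v x = (\<Sum>j\<in>I. M j *v x)"
proof (induction I rule: infinite_finite_induct)
  case (infinite I) thus ?case by (simp add: vec_eq_iff matrix_vector_mult_def)
next
  case empty thus ?case by (simp add: vec_eq_iff matrix_vector_mult_def)
next
  case (insert j I) thus ?case by (simp add: matrix_vector_mult_add_rdistrib)
qed

lemma transpose_sum: "transpose (\<Sum>j\<in>I. M j) = (\<Sum>j\<in>I. transpose (M j))"
  by (induction I rule: infinite_finite_induct) (auto simp: transpose_def vec_eq_iff)

lemma transpose_outer: "transpose (outer v) = outer v"
  by (simp add: transpose_def outer_def vec_eq_iff mult.commute)

lemma outer_mult_vec: "outer v *v x = (v \<bullet> x) *\<^sub>R v"
  by (simp add: vec_eq_iff outer_def matrix_vector_mult_def inner_vec_def sum_distrib_left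
      sum_distrib_right mult_ac)

lemma quadratic_form_sum_outer:
  "x \<bullet> ((\<Sum>j\<in>I. c j *\<^sub>R outer (v j)) *v x) = (\<Sum>j\<in>I. c j * (v j \<bullet> x)\<^sup>2)"
  by (simp add: sum_matrix_vector_mult scaleR_matrix_vector_assoc[symmetric] outer_mult_vec inner_sum_right
      power2_eq_square inner_commute[of x] mult_ac)

lemma outer_le_id_imp_inner_self_le_1:
  assumes "loewner_le (outer v) (mat 1)"
  shows "v \<bullet> v \<le> 1"
proof -
  have "0 \<le> v \<bullet> ((mat 1 - outer v) *v v)" using assms unfolding loewner_le_def by blast
  also have "\<dots> = (v \<bullet> v) * (1 - v \<bullet> v)"
    by (simp add: matrix_vector_mult_diff_rdistrib outer_mult_vec inner_diff_right algebra_simps)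
  finally show ?thesis by (auto simp: zero_le_mult_iff)
qed

lemma inner_sub_projection_le:
  fixes y v :: "real^'m"
  assumes "v \<bullet> v \<le> 1"
  shows "(y - (v \<bullet> y) *\<^sub>R v) \<bullet> (y - (v \<bullet> y) *\<^sub>R v) \<le> y \<bullet> y - (v \<bullet> y)\<^sup>2"
proof -
  have "(y - (v \<bullet> y) *\<^sub>R v) \<bullet> (y - (v \<bullet> y) *\<^sub>R v) = y \<bullet> y - 2 * (v \<bullet> y)\<^sup>2 + (v \<bullet> y)\<^sup>2 * (v \<bullet> v)"
    by (simp add: inner_diff_left inner_diff_right inner_commute[of y v] power2_eq_square algebra_simps)
  also have "\<dots> \<le> y \<bullet> y - 2 * (v \<bullet> y)\<^sup>2 + (v \<bullet> y)\<^sup>2"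
    using assms mult_left_mono[OF assms, of "(v \<bullet> y)\<^sup>2"] by simp
  finally show ?thesis by simp
qed

lemma Phi_refl: "Phi A k k = mat 1"
  by (simp add: Phi_def)

lemma Phi_Suc: "k \<le> n \<Longrightarrow> Phi A (Suc n) k = (mat 1 - A n) ** Phi A n k"
  by (simp add: Phi_def Suc_diff_le)

definition trajectory :: "(nat \<Rightarrow> real^'m) \<Rightarrow> nat \<Rightarrow> real^'m \<Rightarrow> nat \<Rightarrow> real^'m" where
  "trajectory \<phi> k x n = Phi (\<lambda>n. outer (\<phi> n)) n k *v x"

lemma trajectory_start: "trajectory \<phi> k x k = x"
  by (simp add: trajectory_def Phi_refl)

lemma trajectory_Suc:
  "k \<le> n \<Longrightarrow> trajectory \<phi> k x (Suc n)
    = trajectory \<phi> k x n - (\<phi> n \<bullet> trajectory \<phi> k x n) *\<^sub>R \<phi> n"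
  by (simp add: trajectory_def Phi_Suc matrix_vector_mul_assoc[symmetric]
      matrix_vector_mult_diff_rdistrib outer_mult_vec)

lemma trajectory_decomposition:
  assumes "k \<le> n"
  shows "x = trajectory \<phi> k x n + (\<Sum>l=k..<n. (\<phi> l \<bullet> trajectory \<phi> k x l) *\<^sub>R \<phi> l)"
  using assms
proof (induction n rule: dec_induct)
  case base thus ?case by (simp add: trajectory_start)
next
  case (step n) thus ?case by (simp add: trajectory_Suc)
qed

lemma trajectory_energy_le:
  assumes unit: "\<And>n. \<phi> n \<bullet> \<phi> n \<le> 1" and "k \<le> n"
  shows "trajectory \<phi> k x n \<bullet> trajectory \<phi> k x n
    \<le> x \<bullet> x - (\<Sum>l=k..<n. (\<phi> l \<bullet> trajectory \<phi> k x l)\<^sup>2)"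
  using \<open>k \<le> n\<close>
proof (induction n rule: dec_induct)
  case base thus ?case by (simp add: trajectory_start)
next
  case (step n)
  have "trajectory \<phi> k x (Suc n) \<bullet> trajectory \<phi> k x (Suc n)
      \<le> trajectory \<phi> k x n \<bullet> trajectory \<phi> k x n - (\<phi> n \<bullet> trajectory \<phi> k x n)\<^sup>2"
    unfolding trajectory_Suc[OF step(1)] using unit by (rule inner_sub_projection_le)
  thus ?case using step by simp
qed

lemma lambda_min_mul_le_energy_loss:
  fixes \<phi> :: "nat \<Rightarrow> real^'m" and \<mu> :: "nat \<Rightarrow> real"
  assumes mu_nonneg: "\<And>j. 0 \<le> \<mu> j"
  shows "lambda_min (\<Sum>j=k..<N. \<mu> j *\<^sub>R outer (\<phi> j)) * (x \<bullet> x)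
    \<le> (sqrt (Max (\<mu> ` {k..<N})) + sqrt (\<Sum>j=k..<N. \<mu> j * (\<Sum>l=k..<j. (\<phi> j \<bullet> \<phi> l)\<^sup>2)))\<^sup>2
       * (\<Sum>j=k..<N. (\<phi> j \<bullet> trajectory \<phi> k x j)\<^sup>2)"
proof -
  let ?a = "\<lambda>j. \<phi> j \<bullet> trajectory \<phi> k x j"
  have "\<phi> j \<bullet> x = ?a j + (\<Sum>l=k..<j. (\<phi> j \<bullet> \<phi> l) * ?a l)" if "k \<le> j" for j
  proof -
    have "\<phi> j \<bullet> x = \<phi> j \<bullet> (trajectory \<phi> k x j + (\<Sum>l=k..<j. ?a l *\<^sub>R \<phi> l))"
      using trajectory_decomposition[OF that, where x=x and \<phi>=\<phi>] by (rule arg_cong)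
    thus ?thesis by (simp add: inner_add_right inner_sum_right mult_ac)
  qed
  hence "x \<bullet> ((\<Sum>j=k..<N. \<mu> j *\<^sub>R outer (\<phi> j)) *v x)
      = (\<Sum>j=k..<N. \<mu> j * (?a j + (\<Sum>l=k..<j. (\<phi> j \<bullet> \<phi> l) * ?a l))\<^sup>2)"
    unfolding quadratic_form_sum_outer by (intro sum.cong) auto
  moreover have "lambda_min (\<Sum>j=k..<N. \<mu> j *\<^sub>R outer (\<phi> j)) * (x \<bullet> x)
      \<le> x \<bullet> ((\<Sum>j=k..<N. \<mu> j *\<^sub>R outer (\<phi> j)) *v x)"
    by (intro lambda_min_le_quadratic_form) (simp add: transpose_sum transpose_scalar transpose_outer)
  moreover have "(\<Sum>j=k..<N. \<mu> j * (?a j + (\<Sum>l=k..<j. (\<phi> j \<bullet> \<phi> l) * ?a l))\<^sup>2)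
      \<le> (sqrt (Max (\<mu> ` {k..<N})) + sqrt (\<Sum>j=k..<N. \<mu> j * (\<Sum>l=k..<j. (\<phi> j \<bullet> \<phi> l)\<^sup>2)))\<^sup>2
         * (\<Sum>j=k..<N. (?a j)\<^sup>2)"
    using mu_nonneg by (intro sum_weighted_square_perturbed_le) auto
  ultimately show ?thesis by simp
qed

theorem mainTheorem1:
  fixes \<phi> :: "nat \<Rightarrow> real^'m" and \<mu> :: "nat \<Rightarrow> real" and N k :: nat
  assumes psd: "\<And>n. loewner_le 0 (outer (\<phi> n)) \<and> loewner_le (outer (\<phi> n)) (mat 1)"
    and mu_nonneg: "\<And>j. 0 \<le> \<mu> j"
    and kN: "k < N"
    and denom: "(sqrt (Max (\<mu> ` {k..<N}))
                 + sqrt (\<Sum>j=k..<N. \<mu> j * (\<Sum>l=k..<j. (\<phi> j \<bullet> \<phi> l)\<^sup>2)))\<^sup>2 \<noteq> 0"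
  shows "(spec_norm (Phi (\<lambda>n. outer (\<phi> n)) N k))\<^sup>2
         \<le> 1 - lambda_min (\<Sum>j=k..<N. \<mu> j *\<^sub>R outer (\<phi> j))
               / (sqrt (Max (\<mu> ` {k..<N}))
                  + sqrt (\<Sum>j=k..<N. \<mu> j * (\<Sum>l=k..<j. (\<phi> j \<bullet> \<phi> l)\<^sup>2)))\<^sup>2"
proof -
  define S where "S = (\<Sum>j=k..<N. \<mu> j *\<^sub>R outer (\<phi> j))"
  define D where "D = (sqrt (Max (\<mu> ` {k..<N}))
                  + sqrt (\<Sum>j=k..<N. \<mu> j * (\<Sum>l=k..<j. (\<phi> j \<bullet> \<phi> l)\<^sup>2)))\<^sup>2"
  have "0 < D" using denom by (simp add: D_def)
  have "trajectory \<phi> k x N \<bullet> trajectory \<phi> k x N \<le> (1 - lambda_min S / D) * (x \<bullet> x)" for x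
  proof -
    let ?E = "\<Sum>j=k..<N. (\<phi> j \<bullet> trajectory \<phi> k x j)\<^sup>2"
    have "trajectory \<phi> k x N \<bullet> trajectory \<phi> k x N \<le> x \<bullet> x - ?E"
      using psd outer_le_id_imp_inner_self_le_1 kN by (intro trajectory_energy_le) auto
    hence "D * (trajectory \<phi> k x N \<bullet> trajectory \<phi> k x N) \<le> D * (x \<bullet> x) - D * ?E"
      using \<open>0 < D\<close> by (simp flip: right_diff_distrib)
    moreover have "lambda_min S * (x \<bullet> x) \<le> D * ?E"
      unfolding S_def D_def using mu_nonneg by (rule lambda_min_mul_le_energy_loss)
    ultimately show ?thesis using \<open>0 < D\<close> by (simp add: field_simps)
  qed
  thus ?thesis unfolding S_def D_def trajectory_def by (rule spec_norm_square_le)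
qed

end
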